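(* Let $X=(X^{(1)},\dots,X^{(p)})\in\mathbb{R}^p$ be a random vector with finite second moments, mean $\mu_X$ and covariance matrix $\Sigma_X$, and let $\epsilon\in\mathbb{R}$ be a random variable with $E(\epsilon)=0$, $\mathrm{var}(\epsilon)=\sigma^2>0$, uncorrelated with $X^{(1)},\dots,X^{(p)}$. Let $Y=\delta+\sum_{j=1}^p\beta_jX^{(j)}+\epsilon$ for some $\delta\in\mathbb{R}$ and $\beta\in\mathbb{R}^p$, and let $\mathcal{A}=\{j:\beta_j\neq 0\}$ with $\mathrm{peff}=|\mathcal{A}|$. Assume (C1) $\Sigma_X$ is strictly positive definite, and (C2) the non-zero coefficients $\{\beta_j; j\in\mathcal{A}\}$ are a realization of a random vector whose distribution on $\mathbb{R}^{\mathrm{peff}}$ has a density $f$ with respect to Lebesgue measure (after realization they are held fixed in the model). Then the distribution of $(X,Y)$ is partially faithful almost surely with respect to the distribution generating the non-zero regression coefficients.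
   Context: For random variables $Z^{(1)},Z^{(2)}$ and a collection $W$ of random variables, $\rho(Z^{(1)},Z^{(2)}\mid W)$ denotes the population partial correlation. For $\mathcal{S}\subseteq\{1,\dots,p\}$, $X^{(\mathcal{S})}=\{X^{(j)};j\in\mathcal{S}\}$ and $\{j\}^C=\{1,\dots,p\}\setminus\{j\}$. The distribution of $(X,Y)$ is called partially faithful if for every $j\in\{1,\dots,p\}$: if $\rho(Y,X^{(j)}\mid X^{(\mathcal{S})})=0$ for some $\mathcal{S}\subseteq\{j\}^C$, then $\rho(Y,X^{(j)}\mid X^{(\{j\}^C)})=0$. *)

theory Defs
  imports "HOL-Probability.Probability"
begin

definition pcov :: "'a measure \<Rightarrow> ('a \<Rightarrow> real) \<Rightarrow> ('a \<Rightarrow> real) \<Rightarrow> real" where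
  "pcov M U V = (\<integral>\<omega>. (U \<omega> - (\<integral>\<eta>. U \<eta> \<partial>M)) * (V \<omega> - (\<integral>\<eta>. V \<eta> \<partial>M)) \<partial>M)"

definition lin_comb :: "real \<Rightarrow> (nat \<Rightarrow> real) \<Rightarrow> nat set \<Rightarrow> (nat \<Rightarrow> 'a \<Rightarrow> real) \<Rightarrow> 'a \<Rightarrow> real" where
  "lin_comb c0 c S W \<omega> = c0 + (\<Sum>k\<in>S. c k * W k \<omega>)"

definition lin_mse :: "'a measure \<Rightarrow> ('a \<Rightarrow> real) \<Rightarrow> nat set \<Rightarrow> (nat \<Rightarrow> 'a \<Rightarrow> real) \<Rightarrow> real \<Rightarrow> (nat \<Rightarrow> real) \<Rightarrow> real" where
  "lin_mse M Z S W c0 c = (\<integral>\<omega>. (Z \<omega> - lin_comb c0 c S W \<omega>)\<^sup>2 \<partial>M)"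

definition lin_resid :: "'a measure \<Rightarrow> ('a \<Rightarrow> real) \<Rightarrow> nat set \<Rightarrow> (nat \<Rightarrow> 'a \<Rightarrow> real) \<Rightarrow> 'a \<Rightarrow> real" where
  "lin_resid M Z S W =
     (let cc = (SOME cc. \<forall>d0 d. lin_mse M Z S W (fst cc) (snd cc) \<le> lin_mse M Z S W d0 d)
      in (\<lambda>\<omega>. Z \<omega> - lin_comb (fst cc) (snd cc) S W \<omega>))"

definition pcor :: "'a measure \<Rightarrow> ('a \<Rightarrow> real) \<Rightarrow> ('a \<Rightarrow> real) \<Rightarrow> nat set \<Rightarrow> (nat \<Rightarrow> 'a \<Rightarrow> real) \<Rightarrow> real" where
  "pcor M Z1 Z2 S W =
     (let r1 = lin_resid M Z1 S W; r2 = lin_resid M Z2 S W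
      in pcov M r1 r2 / sqrt (pcov M r1 r1 * pcov M r2 r2))"

definition partially_faithful :: "'a measure \<Rightarrow> nat \<Rightarrow> (nat \<Rightarrow> 'a \<Rightarrow> real) \<Rightarrow> ('a \<Rightarrow> real) \<Rightarrow> bool" where
  "partially_faithful M p X Y \<longleftrightarrow>
     (\<forall>j\<in>{1..p}. (\<exists>S\<subseteq>{1..p} - {j}. pcor M Y (X j) S X = 0) \<longrightarrow> pcor M Y (X j) ({1..p} - {j}) X = 0)"

end

theory Submission
  imports Defs
begin

text \<open>For \<open>j \<notin> S\<close> let \<open>R k\<close> be the residual of \<open>X k\<close> after affine regression on the
  \<open>X i\<close>, \<open>i \<in> S\<close>. The residual of \<open>Y\<close> is \<open>\<Sum>k\<in>A. \<beta> k * R k + \<epsilon>\<close>, and \<open>\<epsilon>\<close> is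
  uncorrelated with every \<open>R k\<close>, so \<open>\<rho>(Y, X j | X S)\<close> is a positive multiple of
  \<open>\<Sum>k\<in>A. cov(R j, R k) * \<beta> k\<close>: the residual variance of \<open>Y\<close> is at least \<open>var \<epsilon> > 0\<close>, and
  \<open>cov(R j, R j) > 0\<close> by (C1). As \<open>cov(R j, R k) = 0\<close> for \<open>k \<in> S\<close>, a non-zero partial
  correlation given all other variables forces \<open>j \<in> A\<close>. Hence a violation of partial
  faithfulness puts \<open>\<beta>\<close> on one of finitely many hyperplanes whose normal has \<open>j\<close>-th
  coordinate \<open>cov(R j, R j) \<noteq> 0\<close>; these are Lebesgue null sets, hence null under any
  distribution with a density.\<close>

lemma abs_mult_le_sum_squares: "\<bar>u * v\<bar> \<le> u\<^sup>2 + (v::real)\<^sup>2"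
proof -
  have "2 * (\<bar>u\<bar> * \<bar>v\<bar>) \<le> u\<^sup>2 + v\<^sup>2"
    using sum_squares_bound[of "\<bar>u\<bar>" "\<bar>v\<bar>"] by simp
  moreover have "0 \<le> \<bar>u\<bar> * \<bar>v\<bar>" by simp
  ultimately show ?thesis unfolding abs_mult by linarith
qed

definition square_integrable :: "'a measure \<Rightarrow> ('a \<Rightarrow> real) \<Rightarrow> bool" where
  "square_integrable M Z \<longleftrightarrow> Z \<in> borel_measurable M \<and> integrable M (\<lambda>\<omega>. (Z \<omega>)\<^sup>2)"

lemma pcov_commute: "pcov M U V = pcov M V U"
  by (simp add: pcov_def mult.commute)

lemma lin_resid_form: "\<exists>c0 c. lin_resid M Z S X = (\<lambda>\<omega>. Z \<omega> - lin_comb c0 c S X \<omega>)"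
  unfolding lin_resid_def Let_def by blast

lemma sum_lin_comb:
  "(\<Sum>k\<in>A. b k * lin_comb (c0 k) (c k) S X \<omega>)
     = lin_comb (\<Sum>k\<in>A. b k * c0 k) (\<lambda>i. \<Sum>k\<in>A. b k * c k i) S X \<omega>"
  by (simp add: lin_comb_def distrib_left sum.distrib sum_distrib_left sum_distrib_right
      mult.assoc sum.swap[of _ A S])

lemma resid_diff_eq_resid_insert:
  assumes "finite S" "k \<notin> S"
  shows "(Z \<omega> - lin_comb c0 c S X \<omega>) - t * (X k \<omega> - lin_comb d0 d S X \<omega>)
       = Z \<omega> - lin_comb (c0 - t * d0) (\<lambda>i. if i = k then t else c i - t * d i) (insert k S) X \<omega>"
proof -
  have "(\<Sum>i\<in>S. (if i = k then t else c i - t * d i) * X i \<omega>) = (\<Sum>i\<in>S. (c i - t * d i) * X i \<omega>)"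
    using assms(2) by (intro sum.cong) auto
  then show ?thesis
    using assms by (simp add: lin_comb_def algebra_simps sum_subtractf sum_distrib_left)
qed

context prob_space
begin

lemma square_integrable_integrable: "square_integrable M Z \<Longrightarrow> integrable M Z"
  unfolding square_integrable_def by (auto intro: square_integrable_imp_integrable)

lemma integrable_mult_square_integrable:
  assumes "square_integrable M U" "square_integrable M V"
  shows "integrable M (\<lambda>\<omega>. U \<omega> * V \<omega>)"
proof (rule Bochner_Integration.integrable_bound)
  show "integrable M (\<lambda>\<omega>. (U \<omega>)\<^sup>2 + (V \<omega>)\<^sup>2)"
    using assms by (auto simp: square_integrable_def)
  show "AE \<omega> in M. norm (U \<omega> * V \<omega>) \<le> norm ((U \<omega>)\<^sup>2 + (V \<omega>)\<^sup>2)"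
    using abs_mult_le_sum_squares by simp
qed (use assms in \<open>auto simp: square_integrable_def\<close>)

lemma square_integrable_const: "square_integrable M (\<lambda>\<omega>. c)"
  by (simp add: square_integrable_def)

lemma square_integrable_add:
  assumes "square_integrable M U" "square_integrable M V"
  shows "square_integrable M (\<lambda>\<omega>. U \<omega> + V \<omega>)"
proof -
  have "(\<lambda>\<omega>. (U \<omega> + V \<omega>)\<^sup>2) = (\<lambda>\<omega>. (U \<omega>)\<^sup>2 + 2 * (U \<omega> * V \<omega>) + (V \<omega>)\<^sup>2)"
    by (auto simp: power2_eq_square algebra_simps)
  then show ?thesis
    using assms integrable_mult_square_integrable[OF assms] by (auto simp: square_integrable_def)
qed

lemma square_integrable_cmult:
  "square_integrable M U \<Longrightarrow> square_integrable M (\<lambda>\<omega>. c * U \<omega>)"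
  by (auto simp: square_integrable_def power_mult_distrib)

lemma square_integrable_diff:
  "square_integrable M U \<Longrightarrow> square_integrable M V \<Longrightarrow> square_integrable M (\<lambda>\<omega>. U \<omega> - V \<omega>)"
  using square_integrable_add[OF _ square_integrable_cmult, of U V "-1"] by simp

lemma square_integrable_sum:
  "finite T \<Longrightarrow> (\<And>i. i \<in> T \<Longrightarrow> square_integrable M (U i)) \<Longrightarrow>
    square_integrable M (\<lambda>\<omega>. \<Sum>i\<in>T. U i \<omega>)"
  by (induction T rule: finite_induct) (auto intro: square_integrable_const square_integrable_add)

lemma square_integrable_lin_comb:
  "finite S \<Longrightarrow> \<forall>k\<in>S. square_integrable M (X k) \<Longrightarrow> square_integrable M (lin_comb c0 c S X)"
  unfolding lin_comb_def[abs_def]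
  by (intro square_integrable_add square_integrable_const square_integrable_sum square_integrable_cmult)
    simp_all

lemma pcov_mean_zero:
  assumes "square_integrable M U" "square_integrable M V" "(\<integral>\<omega>. U \<omega> \<partial>M) = 0"
  shows "pcov M U V = (\<integral>\<omega>. U \<omega> * V \<omega> \<partial>M)"
proof -
  let ?m = "\<integral>\<omega>. V \<omega> \<partial>M"
  have "pcov M U V = (\<integral>\<omega>. U \<omega> * V \<omega> - ?m * U \<omega> \<partial>M)"
    unfolding pcov_def using assms(3) by (simp add: algebra_simps)
  also have "\<dots> = (\<integral>\<omega>. U \<omega> * V \<omega> \<partial>M)"
    using assms integrable_mult_square_integrable square_integrable_integrable by simp
  finally show ?thesis .
qed

lemma pcov_cong_AE:
  assumes "AE \<omega> in M. U \<omega> = U' \<omega>" "U \<in> borel_measurable M" "U' \<in> borel_measurable M"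
    "V \<in> borel_measurable M"
  shows "pcov M U V = pcov M U' V"
proof -
  have "(\<integral>\<omega>. U \<omega> \<partial>M) = (\<integral>\<omega>. U' \<omega> \<partial>M)"
    using assms by (intro integral_cong_AE) auto
  then show ?thesis
    unfolding pcov_def using assms by (intro integral_cong_AE) auto
qed

lemma pcov_lin_comb:
  assumes "finite T" "\<forall>i\<in>T. square_integrable M (U i)"
  shows "pcov M (lin_comb c0 c T U) (lin_comb d0 d T U)
       = (\<Sum>i\<in>T. \<Sum>l\<in>T. c i * d l * pcov M (U i) (U l))"
proof -
  define m where "m i = (\<integral>\<omega>. U i \<omega> \<partial>M)" for i
  define F where "F i \<omega> = U i \<omega> - m i" for i \<omega>
  have F: "square_integrable M (F i)" if "i \<in> T" for i
    unfolding F_def[abs_def] using assms(2) that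
    by (auto intro: square_integrable_diff square_integrable_const)
  have mean: "(\<integral>\<omega>. lin_comb c0 c T U \<omega> \<partial>M) = c0 + (\<Sum>i\<in>T. c i * m i)" for c0 c
    using assms square_integrable_integrable
    by (simp add: lin_comb_def m_def prob_space)
  have centred: "lin_comb c0 c T U \<omega> - (c0 + (\<Sum>i\<in>T. c i * m i)) = (\<Sum>i\<in>T. c i * F i \<omega>)" for c0 c \<omega>
    by (simp add: lin_comb_def F_def algebra_simps sum_subtractf)
  have "pcov M (lin_comb c0 c T U) (lin_comb d0 d T U)
      = (\<integral>\<omega>. (\<Sum>i\<in>T. \<Sum>l\<in>T. c i * d l * (F i \<omega> * F l \<omega>)) \<partial>M)"
    unfolding pcov_def mean centred by (simp add: sum_product algebra_simps)
  also have "\<dots> = (\<Sum>i\<in>T. \<Sum>l\<in>T. c i * d l * (\<integral>\<omega>. F i \<omega> * F l \<omega> \<partial>M))"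
    using assms(1) F integrable_mult_square_integrable by simp
  also have "\<dots> = (\<Sum>i\<in>T. \<Sum>l\<in>T. c i * d l * pcov M (U i) (U l))"
    by (simp add: pcov_def F_def m_def)
  finally show ?thesis .
qed

lemma pcov_self_nonneg: "pcov M U U \<ge> 0"
  unfolding pcov_def by (rule integral_nonneg_AE) auto

lemma pcov_add_uncorrelated:
  assumes U: "square_integrable M U" and V: "square_integrable M V"
    and means: "(\<integral>\<omega>. U \<omega> \<partial>M) = 0" "(\<integral>\<omega>. V \<omega> \<partial>M) = 0"
    and uncorr: "(\<integral>\<omega>. U \<omega> * V \<omega> \<partial>M) = 0"
  shows "pcov M (\<lambda>\<omega>. U \<omega> + V \<omega>) (\<lambda>\<omega>. U \<omega> + V \<omega>) = pcov M U U + pcov M V V"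
proof -
  have int: "integrable M (\<lambda>\<omega>. U \<omega> * U \<omega>)" "integrable M (\<lambda>\<omega>. U \<omega> * V \<omega>)"
    "integrable M (\<lambda>\<omega>. V \<omega> * V \<omega>)"
    using U V by (auto intro: integrable_mult_square_integrable)
  have "pcov M (\<lambda>\<omega>. U \<omega> + V \<omega>) (\<lambda>\<omega>. U \<omega> + V \<omega>)
      = (\<integral>\<omega>. U \<omega> * U \<omega> + 2 * (U \<omega> * V \<omega>) + V \<omega> * V \<omega> \<partial>M)"
    using U V means square_integrable_integrable
    by (subst pcov_mean_zero) (auto intro: square_integrable_add simp: algebra_simps)
  also have "\<dots> = pcov M U U + pcov M V V"
    using int uncorr U V means by (simp add: pcov_mean_zero)
  finally show ?thesis .
qed

lemma pcov_cong_AE_self: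
  assumes "AE \<omega> in M. U \<omega> = U' \<omega>" "U \<in> borel_measurable M" "U' \<in> borel_measurable M"
  shows "pcov M U U = pcov M U' U'"
  using pcov_cong_AE[OF assms assms(2)] pcov_cong_AE[OF assms assms(3)] pcov_commute[of M U U']
  by simp

text \<open>When \<open>\<integral>V\<^sup>2 = 0\<close> the quotient is \<open>0\<close> by division by zero; the claim then holds because
  \<open>V\<close> vanishes almost everywhere.\<close>

lemma least_squares_resid_orth:
  assumes U: "square_integrable M U" and V: "square_integrable M V"
  shows "(\<integral>\<omega>. (U \<omega> - (\<integral>\<omega>. U \<omega> * V \<omega> \<partial>M) / (\<integral>\<omega>. V \<omega> * V \<omega> \<partial>M) * V \<omega>) * V \<omega> \<partial>M) = 0"
proof (cases "(\<integral>\<omega>. V \<omega> * V \<omega> \<partial>M) = 0")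
  case True
  then have "AE \<omega> in M. V \<omega> * V \<omega> = 0"
    using integrable_mult_square_integrable[OF V V]
    by (subst integral_nonneg_eq_0_iff_AE[symmetric]) auto
  then have "AE \<omega> in M. (U \<omega> - 0 * V \<omega>) * V \<omega> = 0"
    by eventually_elim simp
  then show ?thesis
    using True by (simp add: integral_eq_zero_AE)
next
  case False
  then show ?thesis
    using integrable_mult_square_integrable[OF U V] integrable_mult_square_integrable[OF V V]
    by (simp add: left_diff_distrib mult.assoc)
qed

end

definition orth_span :: "'a measure \<Rightarrow> (nat \<Rightarrow> 'a \<Rightarrow> real) \<Rightarrow> nat set \<Rightarrow> ('a \<Rightarrow> real) \<Rightarrow> bool" where
  "orth_span M X S R \<longleftrightarrow> (\<integral>\<omega>. R \<omega> \<partial>M) = 0 \<and> (\<forall>k\<in>S. (\<integral>\<omega>. R \<omega> * X k \<omega> \<partial>M) = 0)"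

definition proj_resid ::
    "'a measure \<Rightarrow> (nat \<Rightarrow> 'a \<Rightarrow> real) \<Rightarrow> nat set \<Rightarrow> ('a \<Rightarrow> real) \<Rightarrow> ('a \<Rightarrow> real) \<Rightarrow> bool" where
  "proj_resid M X S Z R \<longleftrightarrow> (\<exists>c0 c. R = (\<lambda>\<omega>. Z \<omega> - lin_comb c0 c S X \<omega>)) \<and> orth_span M X S R"

context prob_space
begin

context
  fixes X :: "nat \<Rightarrow> 'a \<Rightarrow> real" and S :: "nat set"
  assumes finite_S: "finite S" and X_sq: "\<forall>k\<in>S. square_integrable M (X k)"
begin

lemma square_integrable_resid:
  "square_integrable M Z \<Longrightarrow> square_integrable M (\<lambda>\<omega>. Z \<omega> - lin_comb c0 c S X \<omega>)"
  by (intro square_integrable_diff square_integrable_lin_comb finite_S X_sq)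

lemma square_integrable_proj_resid:
  "square_integrable M Z \<Longrightarrow> proj_resid M X S Z R \<Longrightarrow> square_integrable M R"
  unfolding proj_resid_def using square_integrable_resid by blast

lemma square_integrable_lin_resid:
  "square_integrable M Z \<Longrightarrow> square_integrable M (lin_resid M Z S X)"
  using lin_resid_form[of M Z S X] square_integrable_resid by metis

lemma orth_span_lin_comb:
  assumes "square_integrable M R" "orth_span M X S R"
  shows "(\<integral>\<omega>. R \<omega> * lin_comb c0 c S X \<omega> \<partial>M) = 0"
proof -
  have "(\<lambda>\<omega>. R \<omega> * lin_comb c0 c S X \<omega>) = (\<lambda>\<omega>. c0 * R \<omega> + (\<Sum>k\<in>S. c k * (R \<omega> * X k \<omega>)))"
    by (auto simp: lin_comb_def algebra_simps sum_distrib_left)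
  moreover have "integrable M (\<lambda>\<omega>. R \<omega> * X k \<omega>)" if "k \<in> S" for k
    using assms(1) X_sq that by (simp add: integrable_mult_square_integrable)
  ultimately show ?thesis
    using assms finite_S square_integrable_integrable by (simp add: orth_span_def)
qed

lemma proj_resid_insert:
  assumes Z: "square_integrable M Z" and Xk: "square_integrable M (X k)" and k: "k \<notin> S"
    and RZ: "proj_resid M X S Z RZ" and RX: "proj_resid M X S (X k) RX"
  defines "t \<equiv> (\<integral>\<omega>. RZ \<omega> * RX \<omega> \<partial>M) / (\<integral>\<omega>. RX \<omega> * RX \<omega> \<partial>M)"
  shows "proj_resid M X (insert k S) Z (\<lambda>\<omega>. RZ \<omega> - t * RX \<omega>)"
proof -
  obtain c0 c where RZ_eq: "RZ = (\<lambda>\<omega>. Z \<omega> - lin_comb c0 c S X \<omega>)" and oZ: "orth_span M X S RZ"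
    using RZ unfolding proj_resid_def by blast
  obtain d0 d where RX_eq: "RX = (\<lambda>\<omega>. X k \<omega> - lin_comb d0 d S X \<omega>)" and oX: "orth_span M X S RX"
    using RX unfolding proj_resid_def by blast
  define R where "R = (\<lambda>\<omega>. RZ \<omega> - t * RX \<omega>)"
  have sZ: "square_integrable M RZ" and sX: "square_integrable M RX"
    unfolding RZ_eq RX_eq using Z Xk by (auto intro: square_integrable_resid)
  have sR: "square_integrable M R"
    unfolding R_def using sZ sX by (intro square_integrable_diff square_integrable_cmult)
  note int = integrable_mult_square_integrable
  have oS: "orth_span M X S R"
    unfolding orth_span_def
  proof (intro conjI ballI)
    show "(\<integral>\<omega>. R \<omega> \<partial>M) = 0"
      using oZ oX sZ sX square_integrable_integrable by (simp add: R_def orth_span_def)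
    fix i assume i: "i \<in> S"
    then have Xi: "square_integrable M (X i)" using X_sq by simp
    have "(\<lambda>\<omega>. R \<omega> * X i \<omega>) = (\<lambda>\<omega>. RZ \<omega> * X i \<omega> - t * (RX \<omega> * X i \<omega>))"
      by (auto simp: R_def algebra_simps)
    then show "(\<integral>\<omega>. R \<omega> * X i \<omega> \<partial>M) = 0"
      using oZ oX i int[OF sZ Xi] int[OF sX Xi] by (simp add: orth_span_def)
  qed
  have "(\<lambda>\<omega>. R \<omega> * X k \<omega>) = (\<lambda>\<omega>. R \<omega> * RX \<omega> + R \<omega> * lin_comb d0 d S X \<omega>)"
    by (auto simp: RX_eq algebra_simps)
  then have "(\<integral>\<omega>. R \<omega> * X k \<omega> \<partial>M)
      = (\<integral>\<omega>. R \<omega> * RX \<omega> \<partial>M) + (\<integral>\<omega>. R \<omega> * lin_comb d0 d S X \<omega> \<partial>M)"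
    using int[OF sR sX] int[OF sR square_integrable_lin_comb[OF finite_S X_sq]] by simp
  also have "\<dots> = 0"
    using least_squares_resid_orth[OF sZ sX] orth_span_lin_comb[OF sR oS]
    unfolding R_def t_def by simp
  finally have "(\<integral>\<omega>. R \<omega> * X k \<omega> \<partial>M) = 0" .
  moreover have "R = (\<lambda>\<omega>. Z \<omega> - lin_comb (c0 - t * d0) (\<lambda>i. if i = k then t else c i - t * d i)
      (insert k S) X \<omega>)"
    unfolding R_def RZ_eq RX_eq using finite_S k by (simp add: resid_diff_eq_resid_insert)
  ultimately show ?thesis
    using oS unfolding R_def proj_resid_def orth_span_def by blast
qed

end

lemma proj_resid_exists:
  assumes "finite S" "\<forall>k\<in>S. square_integrable M (X k)" "square_integrable M Z"
  shows "\<exists>R. proj_resid M X S Z R"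
  using assms
proof (induction S arbitrary: Z rule: finite_induct)
  case empty
  let ?R = "\<lambda>\<omega>. Z \<omega> - lin_comb (\<integral>\<omega>. Z \<omega> \<partial>M) (\<lambda>_. 0) {} X \<omega>"
  have "(\<integral>\<omega>. ?R \<omega> \<partial>M) = 0"
    using square_integrable_integrable[OF empty(2)] by (simp add: lin_comb_def prob_space)
  then have "proj_resid M X {} Z ?R"
    unfolding proj_resid_def orth_span_def by blast
  then show ?case by blast
next
  case (insert k S)
  have XS: "\<forall>i\<in>S. square_integrable M (X i)" and Xk: "square_integrable M (X k)"
    using insert.prems(1) by auto
  obtain RZ where RZ: "proj_resid M X S Z RZ"
    using insert.IH[OF XS insert.prems(2)] by blast
  obtain RX where RX: "proj_resid M X S (X k) RX"
    using insert.IH[OF XS Xk] by blast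
  show ?case
    using proj_resid_insert[OF insert.hyps(1) XS insert.prems(2) Xk insert.hyps(2) RZ RX] by blast
qed

context
  fixes X :: "nat \<Rightarrow> 'a \<Rightarrow> real" and S :: "nat set"
  assumes finite_S: "finite S" and X_sq: "\<forall>k\<in>S. square_integrable M (X k)"
begin

lemma lin_mse_pythagoras:
  assumes Z: "square_integrable M Z"
    and R_eq: "R = (\<lambda>\<omega>. Z \<omega> - lin_comb c0 c S X \<omega>)" and R: "orth_span M X S R"
  shows "lin_mse M Z S X d0 d
    = (\<integral>\<omega>. (R \<omega>)\<^sup>2 \<partial>M) + (\<integral>\<omega>. (lin_comb (c0 - d0) (\<lambda>i. c i - d i) S X \<omega>)\<^sup>2 \<partial>M)"
proof -
  define D where "D = lin_comb (c0 - d0) (\<lambda>i. c i - d i) S X"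
  have sR: "square_integrable M R"
    unfolding R_eq using Z by (rule square_integrable_resid[OF finite_S X_sq])
  have sD: "square_integrable M D"
    unfolding D_def by (rule square_integrable_lin_comb[OF finite_S X_sq])
  have "Z \<omega> - lin_comb d0 d S X \<omega> = R \<omega> + D \<omega>" for \<omega>
    by (simp add: R_eq D_def lin_comb_def algebra_simps sum_subtractf)
  then have "lin_mse M Z S X d0 d = (\<integral>\<omega>. (R \<omega>)\<^sup>2 + 2 * (R \<omega> * D \<omega>) + (D \<omega>)\<^sup>2 \<partial>M)"
    unfolding lin_mse_def by (simp add: power2_eq_square algebra_simps)
  also have "\<dots> = (\<integral>\<omega>. (R \<omega>)\<^sup>2 \<partial>M) + 2 * (\<integral>\<omega>. R \<omega> * D \<omega> \<partial>M) + (\<integral>\<omega>. (D \<omega>)\<^sup>2 \<partial>M)"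
    using sR sD integrable_mult_square_integrable[OF sR sD] by (simp add: square_integrable_def)
  also have "(\<integral>\<omega>. R \<omega> * D \<omega> \<partial>M) = 0"
    unfolding D_def by (rule orth_span_lin_comb[OF finite_S X_sq sR R])
  finally show ?thesis by (simp add: D_def)
qed

text \<open>The least-squares coefficients chosen by \<open>lin_resid\<close> are not unique when the \<open>X k\<close> are
  collinear, so the residual is determined only almost everywhere.\<close>

lemma lin_resid_AE_eq:
  assumes Z: "square_integrable M Z" and R: "proj_resid M X S Z R"
  shows "AE \<omega> in M. lin_resid M Z S X \<omega> = R \<omega>"
proof -
  obtain c0 c where R_eq: "R = (\<lambda>\<omega>. Z \<omega> - lin_comb c0 c S X \<omega>)" and oR: "orth_span M X S R"
    using R unfolding proj_resid_def by blast
  note pyth = lin_mse_pythagoras[OF Z R_eq oR]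
  have min: "lin_mse M Z S X c0 c = (\<integral>\<omega>. (R \<omega>)\<^sup>2 \<partial>M)"
    using pyth[of c0 c] by (simp add: lin_comb_def)
  define cc where "cc = (SOME cc. \<forall>d0 d. lin_mse M Z S X (fst cc) (snd cc) \<le> lin_mse M Z S X d0 d)"
  have "lin_mse M Z S X c0 c \<le> lin_mse M Z S X d0 d" for d0 d
    using pyth[of d0 d] min by simp
  then have "\<exists>cc. \<forall>d0 d. lin_mse M Z S X (fst cc) (snd cc) \<le> lin_mse M Z S X d0 d"
    by (metis fst_conv snd_conv)
  then have "\<forall>d0 d. lin_mse M Z S X (fst cc) (snd cc) \<le> lin_mse M Z S X d0 d"
    unfolding cc_def by (rule someI_ex)
  define D where "D = lin_comb (c0 - fst cc) (\<lambda>i. c i - snd cc i) S X"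
  have "(\<integral>\<omega>. (D \<omega>)\<^sup>2 \<partial>M) \<le> 0"
    using spec2[OF \<open>\<forall>d0 d. _\<close>, of c0 c] pyth[of "fst cc" "snd cc"] min unfolding D_def by linarith
  then have "AE \<omega> in M. (D \<omega>)\<^sup>2 = 0"
    using square_integrable_lin_comb[OF finite_S X_sq] unfolding D_def square_integrable_def
    by (subst integral_nonneg_eq_0_iff_AE[symmetric]) (auto intro: antisym)
  moreover have "lin_resid M Z S X \<omega> = R \<omega> + D \<omega>" for \<omega>
    unfolding lin_resid_def Let_def cc_def[symmetric] R_eq D_def
    by (simp add: lin_comb_def algebra_simps sum_subtractf)
  ultimately show ?thesis by auto
qed

lemma proj_resid_lin_resid:
  assumes Z: "square_integrable M Z"
  shows "proj_resid M X S Z (lin_resid M Z S X)"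
proof -
  obtain R where R: "proj_resid M X S Z R"
    using proj_resid_exists[OF finite_S X_sq Z] by blast
  have ae: "AE \<omega> in M. lin_resid M Z S X \<omega> = R \<omega>"
    using Z R by (rule lin_resid_AE_eq)
  have meas: "R \<in> borel_measurable M" "lin_resid M Z S X \<in> borel_measurable M"
    using square_integrable_proj_resid[OF finite_S X_sq Z R] square_integrable_lin_resid[OF finite_S X_sq Z]
    by (auto simp: square_integrable_def)
  have "orth_span M X S (lin_resid M Z S X)"
    unfolding orth_span_def
  proof (intro conjI ballI)
    have "(\<integral>\<omega>. lin_resid M Z S X \<omega> \<partial>M) = (\<integral>\<omega>. R \<omega> \<partial>M)"
      using ae meas by (intro integral_cong_AE) auto
    then show "(\<integral>\<omega>. lin_resid M Z S X \<omega> \<partial>M) = 0"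
      using R by (simp add: proj_resid_def orth_span_def)
    fix k assume k: "k \<in> S"
    have "(\<integral>\<omega>. lin_resid M Z S X \<omega> * X k \<omega> \<partial>M) = (\<integral>\<omega>. R \<omega> * X k \<omega> \<partial>M)"
      using ae meas X_sq k by (intro integral_cong_AE) (auto simp: square_integrable_def)
    then show "(\<integral>\<omega>. lin_resid M Z S X \<omega> * X k \<omega> \<partial>M) = 0"
      using R k by (simp add: proj_resid_def orth_span_def)
  qed
  then show ?thesis
    using lin_resid_form unfolding proj_resid_def by blast
qed

lemma orth_span_add:
  assumes "square_integrable M U" "square_integrable M V" "orth_span M X S U" "orth_span M X S V"
  shows "orth_span M X S (\<lambda>\<omega>. U \<omega> + V \<omega>)"
  using assms X_sq square_integrable_integrable integrable_mult_square_integrable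
  by (simp add: orth_span_def distrib_right)

lemma orth_span_cmult: "orth_span M X S U \<Longrightarrow> orth_span M X S (\<lambda>\<omega>. c * U \<omega>)"
  by (simp add: orth_span_def mult.assoc)

lemma orth_span_sum:
  assumes "finite A" "\<forall>k\<in>A. square_integrable M (U k) \<and> orth_span M X S (U k)"
  shows "orth_span M X S (\<lambda>\<omega>. \<Sum>k\<in>A. U k \<omega>)"
  using assms
proof (induction A rule: finite_induct)
  case empty
  then show ?case by (simp add: orth_span_def)
next
  case (insert k A)
  then show ?case
    by (simp add: orth_span_add square_integrable_sum)
qed

lemma proj_resid_affine:
  assumes A: "finite A" and Z: "\<forall>k\<in>A. square_integrable M (Z k)"
    and R: "\<forall>k\<in>A. proj_resid M X S (Z k) (R k)"
    and E: "square_integrable M E" "orth_span M X S E"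
  shows "proj_resid M X S (\<lambda>\<omega>. \<delta> + (\<Sum>k\<in>A. b k * Z k \<omega>) + E \<omega>)
                          (\<lambda>\<omega>. (\<Sum>k\<in>A. b k * R k \<omega>) + E \<omega>)"
proof -
  obtain c0 c where R_eq: "\<forall>k\<in>A. R k = (\<lambda>\<omega>. Z k \<omega> - lin_comb (c0 k) (c k) S X \<omega>)"
    using R unfolding proj_resid_def by metis
  have sR: "\<forall>k\<in>A. square_integrable M (R k)"
    using Z R square_integrable_proj_resid[OF finite_S X_sq] by blast
  have "(\<lambda>\<omega>. (\<Sum>k\<in>A. b k * R k \<omega>) + E \<omega>)
      = (\<lambda>\<omega>. \<delta> + (\<Sum>k\<in>A. b k * Z k \<omega>) + E \<omega>
              - lin_comb (\<delta> + (\<Sum>k\<in>A. b k * c0 k)) (\<lambda>i. \<Sum>k\<in>A. b k * c k i) S X \<omega>)"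
  proof
    fix \<omega>
    have "(\<Sum>k\<in>A. b k * R k \<omega>)
        = (\<Sum>k\<in>A. b k * Z k \<omega>) - (\<Sum>k\<in>A. b k * lin_comb (c0 k) (c k) S X \<omega>)"
      using R_eq by (simp add: right_diff_distrib sum_subtractf)
    then show "(\<Sum>k\<in>A. b k * R k \<omega>) + E \<omega>
        = \<delta> + (\<Sum>k\<in>A. b k * Z k \<omega>) + E \<omega>
          - lin_comb (\<delta> + (\<Sum>k\<in>A. b k * c0 k)) (\<lambda>i. \<Sum>k\<in>A. b k * c k i) S X \<omega>"
      unfolding sum_lin_comb by (simp add: lin_comb_def)
  qed
  moreover have "orth_span M X S (\<lambda>\<omega>. (\<Sum>k\<in>A. b k * R k \<omega>) + E \<omega>)"
    using A R sR E
    by (intro orth_span_add orth_span_sum square_integrable_sum square_integrable_cmult)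
      (auto simp: proj_resid_def intro: orth_span_cmult square_integrable_cmult)
  ultimately show ?thesis
    unfolding proj_resid_def by blast
qed

end

end

lemma resid_eq_lin_comb:
  assumes "finite T" "S \<subseteq> T" "j \<in> T" "j \<notin> S"
  shows "(\<lambda>\<omega>. X j \<omega> - lin_comb c0 c S X \<omega>)
       = lin_comb (- c0) (\<lambda>i. if i = j then 1 else if i \<in> S then - c i else 0) T X"
proof
  fix \<omega>
  have "(\<Sum>i\<in>T. (if i = j then 1 else if i \<in> S then - c i else 0) * X i \<omega>)
      = (\<Sum>i\<in>T. (if i = j then X j \<omega> else 0) - (if i \<in> S then c i * X i \<omega> else 0))"
    using assms by (intro sum.cong) auto
  also have "\<dots> = X j \<omega> - (\<Sum>i\<in>S. c i * X i \<omega>)"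
    using assms by (simp add: sum_subtractf sum.inter_restrict[symmetric] Int_absorb1)
  finally show "X j \<omega> - lin_comb c0 c S X \<omega>
      = lin_comb (- c0) (\<lambda>i. if i = j then 1 else if i \<in> S then - c i else 0) T X \<omega>"
    by (simp add: lin_comb_def)
qed

lemma hyperplane_null_sets_PiM:
  fixes a :: "nat \<Rightarrow> real"
  assumes A: "finite A" and j: "j \<in> A" and aj: "a j \<noteq> 0"
  shows "{b \<in> space (PiM A (\<lambda>_. lborel)). (\<Sum>k\<in>A. a k * b k) = 0} \<in> null_sets (PiM A (\<lambda>_. lborel))"
proof -
  interpret product_sigma_finite "\<lambda>_::nat. lborel :: real measure" by standard
  let ?P = "PiM A (\<lambda>_. lborel :: real measure)"
  let ?H = "{b \<in> space ?P. (\<Sum>k\<in>A. a k * b k) = 0}"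
  define I where "I = A - {j}"
  let ?Q = "PiM I (\<lambda>_. lborel :: real measure)"
  have AI: "A = insert j I" and jI: "j \<notin> I" and I: "finite I"
    using A j by (auto simp: I_def)
  have H: "?H \<in> sets ?P" by measurable
  have "emeasure ?P ?H = (\<integral>\<^sup>+ b. indicator ?H b \<partial>?P)"
    using H by simp
  also have "\<dots> = (\<integral>\<^sup>+ x. (\<integral>\<^sup>+ y. indicator ?H (x(j := y)) \<partial>lborel) \<partial>?Q)"
    unfolding AI by (rule product_nn_integral_insert[OF I jI]) (use H AI in simp)
  also have "\<dots> = (\<integral>\<^sup>+ x. 0 \<partial>?Q)"
  proof (intro nn_integral_cong)
    fix x assume x: "x \<in> space ?Q"
    have "x(j := y) \<in> ?H \<longleftrightarrow> y = - (\<Sum>k\<in>I. a k * x k) / a j" for y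
    proof -
      have "(\<Sum>k\<in>A. a k * (x(j := y)) k) = a j * y + (\<Sum>k\<in>I. a k * x k)"
        unfolding AI using I jI by (auto intro!: sum.cong)
      moreover have "x(j := y) \<in> space ?P"
        using x unfolding AI by (auto simp: space_PiM PiE_def extensional_def)
      ultimately show ?thesis
        using aj by (auto simp: field_simps)
    qed
    then have "(\<lambda>y. indicator ?H (x(j := y)) :: ennreal) = indicator {- (\<Sum>k\<in>I. a k * x k) / a j}"
      by (auto simp: indicator_def)
    then show "(\<integral>\<^sup>+ y. indicator ?H (x(j := y)) \<partial>lborel) = 0"
      by simp
  qed
  finally show ?thesis
    using H by (simp add: null_sets_def)
qed

locale regression_model = prob_space +
  fixes p :: nat and X :: "nat \<Rightarrow> 'a \<Rightarrow> real" and eps :: "'a \<Rightarrow> real"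
  assumes X_sq: "\<forall>j\<in>{1..p}. square_integrable M (X j)"
    and eps_sq: "square_integrable M eps"
    and eps_mean: "(\<integral>\<omega>. eps \<omega> \<partial>M) = 0"
    and eps_var: "pcov M eps eps > 0"
    and eps_uncorr: "\<And>j. j \<in> {1..p} \<Longrightarrow> pcov M eps (X j) = 0"
    and cov_pos_def: "\<And>c. (\<exists>j\<in>{1..p}. c j \<noteq> 0) \<Longrightarrow>
      (\<Sum>i\<in>{1..p}. \<Sum>j\<in>{1..p}. c i * c j * pcov M (X i) (X j)) > 0"
begin

definition X_resid :: "nat set \<Rightarrow> nat \<Rightarrow> 'a \<Rightarrow> real" where
  "X_resid S k = lin_resid M (X k) S X"

definition pcov_given :: "nat set \<Rightarrow> nat \<Rightarrow> nat \<Rightarrow> real" where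
  "pcov_given S j k = pcov M (X_resid S j) (X_resid S k)"

definition response :: "real \<Rightarrow> nat set \<Rightarrow> (nat \<Rightarrow> real) \<Rightarrow> 'a \<Rightarrow> real" where
  "response \<delta> A b = (\<lambda>\<omega>. \<delta> + (\<Sum>k\<in>A. b k * X k \<omega>) + eps \<omega>)"

lemma square_integrable_response:
  "A \<subseteq> {1..p} \<Longrightarrow> square_integrable M (response \<delta> A b)"
  unfolding response_def using X_sq finite_subset[of A "{1..p}"]
  by (intro square_integrable_add square_integrable_const square_integrable_sum
      square_integrable_cmult eps_sq) auto

lemma eps_orth_span: "T \<subseteq> {1..p} \<Longrightarrow> orth_span M X T eps"
  using eps_uncorr pcov_mean_zero[OF eps_sq _ eps_mean] X_sq
  by (auto simp: orth_span_def eps_mean)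

context
  fixes S :: "nat set"
  assumes S: "S \<subseteq> {1..p}"
begin

lemma finite_S: "finite S"
  using S finite_subset by blast

lemma X_sq_S: "\<forall>k\<in>S. square_integrable M (X k)"
  using S X_sq by blast

lemma proj_resid_X_resid: "k \<in> {1..p} \<Longrightarrow> proj_resid M X S (X k) (X_resid S k)"
  unfolding X_resid_def using X_sq by (intro proj_resid_lin_resid[OF finite_S X_sq_S]) simp

lemma square_integrable_X_resid: "k \<in> {1..p} \<Longrightarrow> square_integrable M (X_resid S k)"
  unfolding X_resid_def using X_sq by (intro square_integrable_lin_resid[OF finite_S X_sq_S]) simp

lemma X_resid_mean: "k \<in> {1..p} \<Longrightarrow> (\<integral>\<omega>. X_resid S k \<omega> \<partial>M) = 0"
  using proj_resid_X_resid by (simp add: proj_resid_def orth_span_def)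

lemma eps_X_resid:
  assumes k: "k \<in> {1..p}"
  shows "(\<integral>\<omega>. eps \<omega> * X_resid S k \<omega> \<partial>M) = 0"
proof -
  obtain c0 c where R: "X_resid S k = (\<lambda>\<omega>. X k \<omega> - lin_comb c0 c S X \<omega>)"
    using proj_resid_X_resid[OF k] unfolding proj_resid_def by blast
  have "(\<integral>\<omega>. eps \<omega> * X k \<omega> \<partial>M) = 0"
    using eps_orth_span[of "{1..p}"] k by (simp add: orth_span_def mult.commute)
  moreover have "(\<integral>\<omega>. eps \<omega> * lin_comb c0 c S X \<omega> \<partial>M) = 0"
    by (rule orth_span_lin_comb[OF finite_S X_sq_S eps_sq eps_orth_span[OF S]])
  moreover have "integrable M (\<lambda>\<omega>. eps \<omega> * X k \<omega>)"
    "integrable M (\<lambda>\<omega>. eps \<omega> * lin_comb c0 c S X \<omega>)"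
    using k X_sq square_integrable_lin_comb[OF finite_S X_sq_S]
    by (auto intro: integrable_mult_square_integrable eps_sq)
  ultimately show ?thesis
    by (simp add: R right_diff_distrib)
qed

lemma pcov_given_eq_0:
  assumes k: "k \<in> S" and j: "j \<in> {1..p}"
  shows "pcov_given S j k = 0"
proof -
  have Xk: "square_integrable M (X k)"
    using k X_sq_S by blast
  have "(\<lambda>\<omega>. 0) = (\<lambda>\<omega>. X k \<omega> - lin_comb 0 (\<lambda>i. if i = k then 1 else 0) S X \<omega>)"
    using k finite_S by (simp add: lin_comb_def mult_delta_left)
  then have "\<exists>c0 c. (\<lambda>\<omega>. 0) = (\<lambda>\<omega>. X k \<omega> - lin_comb c0 c S X \<omega>)"
    by blast
  then have "proj_resid M X S (X k) (\<lambda>\<omega>. 0)"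
    by (simp add: proj_resid_def orth_span_def)
  then have "AE \<omega> in M. X_resid S k \<omega> = 0"
    unfolding X_resid_def by (rule lin_resid_AE_eq[OF finite_S X_sq_S Xk])
  then have "pcov M (X_resid S k) (X_resid S j) = pcov M (\<lambda>\<omega>. 0) (X_resid S j)"
    using S k j square_integrable_X_resid by (intro pcov_cong_AE) (auto simp: square_integrable_def)
  then show ?thesis
    by (simp add: pcov_given_def pcov_commute pcov_def)
qed

lemma pcov_given_self_pos:
  assumes j: "j \<in> {1..p}" "j \<notin> S"
  shows "pcov_given S j j > 0"
proof -
  obtain c0 c where "X_resid S j = (\<lambda>\<omega>. X j \<omega> - lin_comb c0 c S X \<omega>)"
    using proj_resid_X_resid[OF j(1)] unfolding proj_resid_def by blast
  also have "\<dots> = lin_comb (- c0) (\<lambda>i. if i = j then 1 else if i \<in> S then - c i else 0) {1..p} X"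
    using S j by (intro resid_eq_lin_comb) auto
  finally have "pcov_given S j j = (\<Sum>i\<in>{1..p}. \<Sum>l\<in>{1..p}.
      (if i = j then 1 else if i \<in> S then - c i else 0) *
      (if l = j then 1 else if l \<in> S then - c l else 0) * pcov M (X i) (X l))"
    unfolding pcov_given_def using X_sq by (simp add: pcov_lin_comb)
  also have "\<dots> > 0"
    using j by (intro cov_pos_def) auto
  finally show ?thesis .
qed

lemma proj_resid_response:
  assumes A: "A \<subseteq> {1..p}"
  shows "proj_resid M X S (response \<delta> A b) (\<lambda>\<omega>. (\<Sum>k\<in>A. b k * X_resid S k \<omega>) + eps \<omega>)"
  unfolding response_def using A X_sq proj_resid_X_resid finite_subset[OF A]
  by (intro proj_resid_affine[OF finite_S X_sq_S] eps_sq eps_orth_span[OF S]) auto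

lemma square_integrable_response_resid:
  assumes A: "A \<subseteq> {1..p}"
  shows "square_integrable M (\<lambda>\<omega>. (\<Sum>k\<in>A. b k * X_resid S k \<omega>) + eps \<omega>)"
  using A finite_subset[OF A] square_integrable_X_resid
  by (intro square_integrable_add square_integrable_sum square_integrable_cmult eps_sq) auto

lemma response_resid_AE_eq:
  assumes A: "A \<subseteq> {1..p}"
  shows "AE \<omega> in M. lin_resid M (response \<delta> A b) S X \<omega> = (\<Sum>k\<in>A. b k * X_resid S k \<omega>) + eps \<omega>"
  by (rule lin_resid_AE_eq[OF finite_S X_sq_S square_integrable_response[OF A] proj_resid_response[OF A]])

lemma pcov_response_resid_X_resid:
  assumes A: "A \<subseteq> {1..p}" and j: "j \<in> {1..p}"
  shows "pcov M (lin_resid M (response \<delta> A b) S X) (X_resid S j) = (\<Sum>k\<in>A. pcov_given S j k * b k)"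
proof -
  let ?W = "\<lambda>\<omega>. (\<Sum>k\<in>A. b k * X_resid S k \<omega>) + eps \<omega>"
  have sW: "square_integrable M ?W"
    using A by (rule square_integrable_response_resid)
  have sR: "\<forall>k\<in>A. square_integrable M (X_resid S k)" "square_integrable M (X_resid S j)"
    using A j square_integrable_X_resid by auto
  have "pcov M (lin_resid M (response \<delta> A b) S X) (X_resid S j) = pcov M ?W (X_resid S j)"
    using response_resid_AE_eq[OF A] sW sR
      square_integrable_lin_resid[OF finite_S X_sq_S square_integrable_response[OF A]]
    by (intro pcov_cong_AE) (auto simp: square_integrable_def)
  also have "\<dots> = (\<integral>\<omega>. ?W \<omega> * X_resid S j \<omega> \<partial>M)"
    using proj_resid_response[OF A] sW sR
    by (intro pcov_mean_zero) (auto simp: proj_resid_def orth_span_def)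
  also have "\<dots> = (\<Sum>k\<in>A. b k * (\<integral>\<omega>. X_resid S k \<omega> * X_resid S j \<omega> \<partial>M))
      + (\<integral>\<omega>. eps \<omega> * X_resid S j \<omega> \<partial>M)"
    using sR finite_subset[OF A] integrable_mult_square_integrable eps_sq
    by (simp add: distrib_right sum_distrib_right mult.assoc)
  also have "\<dots> = (\<Sum>k\<in>A. pcov_given S j k * b k)"
    using A sR X_resid_mean eps_X_resid[OF j]
    by (auto simp: pcov_given_def pcov_commute[of M "X_resid S j"] pcov_mean_zero mult.commute
        intro!: sum.cong)
  finally show ?thesis .
qed

lemma pcov_response_resid_self_pos:
  assumes A: "A \<subseteq> {1..p}"
  shows "pcov M (lin_resid M (response \<delta> A b) S X) (lin_resid M (response \<delta> A b) S X) > 0"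
proof -
  define V where "V \<omega> = (\<Sum>k\<in>A. b k * X_resid S k \<omega>)" for \<omega>
  have sR: "\<forall>k\<in>A. square_integrable M (X_resid S k)" and finA: "finite A"
    using A square_integrable_X_resid finite_subset[OF A] by auto
  then have sV: "square_integrable M V"
    unfolding V_def[abs_def] by (intro square_integrable_sum square_integrable_cmult) auto
  have V_mean: "(\<integral>\<omega>. V \<omega> \<partial>M) = 0"
    using A finA sR X_resid_mean square_integrable_integrable by (simp add: V_def subset_iff)
  have "integrable M (\<lambda>\<omega>. eps \<omega> * X_resid S k \<omega>)" if "k \<in> A" for k
    using that sR by (intro integrable_mult_square_integrable eps_sq) auto
  then have "(\<integral>\<omega>. eps \<omega> * V \<omega> \<partial>M) = (\<Sum>k\<in>A. b k * (\<integral>\<omega>. eps \<omega> * X_resid S k \<omega> \<partial>M))"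
    unfolding V_def sum_distrib_left
    by (subst Bochner_Integration.integral_sum) (auto simp: mult.left_commute)
  also have "\<dots> = 0"
    using A eps_X_resid by (auto intro!: sum.neutral)
  finally have "pcov M (\<lambda>\<omega>. V \<omega> + eps \<omega>) (\<lambda>\<omega>. V \<omega> + eps \<omega>) = pcov M V V + pcov M eps eps"
    by (intro pcov_add_uncorrelated[OF sV eps_sq V_mean eps_mean]) (simp add: mult.commute)
  moreover have "pcov M (lin_resid M (response \<delta> A b) S X) (lin_resid M (response \<delta> A b) S X)
      = pcov M (\<lambda>\<omega>. V \<omega> + eps \<omega>) (\<lambda>\<omega>. V \<omega> + eps \<omega>)"
    using response_resid_AE_eq[OF A] square_integrable_response_resid[OF A]
      square_integrable_lin_resid[OF finite_S X_sq_S square_integrable_response[OF A]]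
    unfolding V_def by (intro pcov_cong_AE_self) (auto simp: square_integrable_def)
  ultimately show ?thesis
    using pcov_self_nonneg[of V] eps_var by simp
qed

lemma pcor_response_eq_0_iff:
  assumes A: "A \<subseteq> {1..p}" and j: "j \<in> {1..p}" "j \<notin> S"
  shows "pcor M (response \<delta> A b) (X j) S X = 0 \<longleftrightarrow> (\<Sum>k\<in>A. pcov_given S j k * b k) = 0"
  using pcov_response_resid_self_pos[OF A, of \<delta> b] pcov_given_self_pos[OF j]
  unfolding pcor_def Let_def X_resid_def[symmetric] pcov_response_resid_X_resid[OF A j(1)]
  by (simp add: pcov_given_def)

end

end

context regression_model
begin

lemma not_partially_faithful_imp_hyperplane:
  assumes A: "A \<subseteq> {1..p}" and not_pf: "\<not> partially_faithful M p X (response \<delta> A b)"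
  shows "\<exists>j\<in>A. \<exists>S\<subseteq>{1..p} - {j}. (\<Sum>k\<in>A. pcov_given S j k * b k) = 0"
proof -
  obtain j S where j: "j \<in> {1..p}" and S: "S \<subseteq> {1..p} - {j}"
    and zero: "pcor M (response \<delta> A b) (X j) S X = 0"
    and nonzero: "pcor M (response \<delta> A b) (X j) ({1..p} - {j}) X \<noteq> 0"
    using not_pf unfolding partially_faithful_def by blast
  have "(\<Sum>k\<in>A. pcov_given ({1..p} - {j}) j k * b k) \<noteq> 0"
    using nonzero pcor_response_eq_0_iff[of "{1..p} - {j}" A j] A j by auto
  then obtain k where k: "k \<in> A" "pcov_given ({1..p} - {j}) j k \<noteq> 0"
    by (metis (mono_tags, lifting) mult_zero_left sum.neutral)
  have "j \<in> A"
    using k pcov_given_eq_0[of "{1..p} - {j}" k j] A j by (cases "k = j") auto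
  moreover have "(\<Sum>k\<in>A. pcov_given S j k * b k) = 0"
    using zero pcor_response_eq_0_iff[of S A j] A j S by auto
  ultimately show ?thesis
    using S by blast
qed

lemma AE_partially_faithful:
  assumes A: "A \<subseteq> {1..p}"
  shows "AE b in PiM A (\<lambda>_. lborel). partially_faithful M p X (response \<delta> A b)"
proof (rule AE_I')
  let ?P = "PiM A (\<lambda>_. lborel :: real measure)"
  let ?H = "\<lambda>j S. {b \<in> space ?P. (\<Sum>k\<in>A. pcov_given S j k * b k) = 0}"
  have fin: "finite A"
    using A finite_subset by blast
  have "?H j S \<in> null_sets ?P" if "j \<in> A" "S \<subseteq> {1..p} - {j}" for j S
  proof -
    have "pcov_given S j j > 0"
      using that A by (intro pcov_given_self_pos) auto
    then show ?thesis
      using that by (intro hyperplane_null_sets_PiM fin) auto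
  qed
  then show "(\<Union>j\<in>A. \<Union>S\<in>Pow ({1..p} - {j}). ?H j S) \<in> null_sets ?P"
    using fin by (intro null_sets_UN' countable_finite) auto
  show "{b \<in> space ?P. \<not> partially_faithful M p X (response \<delta> A b)}
      \<subseteq> (\<Union>j\<in>A. \<Union>S\<in>Pow ({1..p} - {j}). ?H j S)"
    using not_partially_faithful_imp_hyperplane[OF A] by blast
qed

end

theorem theorem1:
  fixes M :: "'a measure" and p :: nat and X :: "nat \<Rightarrow> 'a \<Rightarrow> real" and eps :: "'a \<Rightarrow> real"
    and \<delta> :: real and A :: "nat set" and f :: "(nat \<Rightarrow> real) \<Rightarrow> ennreal"
  assumes "prob_space M"
    and X_meas: "\<And>j. j \<in> {1..p} \<Longrightarrow> X j \<in> borel_measurable M"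
    and X_sq: "\<And>j. j \<in> {1..p} \<Longrightarrow> integrable M (\<lambda>\<omega>. (X j \<omega>)\<^sup>2)"
    and eps_meas: "eps \<in> borel_measurable M"
    and eps_sq: "integrable M (\<lambda>\<omega>. (eps \<omega>)\<^sup>2)"
    and eps_mean: "(\<integral>\<omega>. eps \<omega> \<partial>M) = 0"
    and eps_var: "pcov M eps eps > 0"
    and eps_uncorr: "\<And>j. j \<in> {1..p} \<Longrightarrow> pcov M eps (X j) = 0"
    and C1: "\<And>c. (\<exists>j\<in>{1..p}. c j \<noteq> 0) \<Longrightarrow>
               (\<Sum>i\<in>{1..p}. \<Sum>j\<in>{1..p}. c i * c j * pcov M (X i) (X j)) > 0"
    and A_sub: "A \<subseteq> {1..p}"
    and C2_meas: "f \<in> borel_measurable (PiM A (\<lambda>_. lborel))"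
    and C2_prob: "prob_space (density (PiM A (\<lambda>_. lborel)) f)"
  shows "AE b in density (PiM A (\<lambda>_. lborel)) f.
           (\<forall>j\<in>A. b j \<noteq> 0) \<longrightarrow>
           partially_faithful M p X (\<lambda>\<omega>. \<delta> + (\<Sum>j\<in>A. b j * X j \<omega>) + eps \<omega>)"
proof -
  \<comment> \<open>Only a null set of coefficient vectors is excluded.\<close>
  interpret regression_model M p X eps
    using assms(1) X_meas X_sq eps_meas eps_sq eps_mean eps_var eps_uncorr C1
    by (intro regression_model.intro regression_model_axioms.intro) (auto simp: square_integrable_def)
  have "AE b in PiM A (\<lambda>_. lborel). partially_faithful M p X (response \<delta> A b)"
    using A_sub by (rule AE_partially_faithful)
  then show ?thesis
    unfolding AE_density[OF C2_meas] response_def by (auto elim: eventually_mono)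
qed

end
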